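(* For every integer $m\ge0$, the space of $L_1$-invariants in $S^m(Q^\times/Q)$ is $\mathbb{C}q_1^m$; that is, $H^0(L_1;S^*(Q^\times/Q))=\mathbb{C}[q_1]$ is the polynomial algebra in $q_1$.
   Context: $Q^\times$ is the Fréchet space of holomorphic quadratic differentials $f(z)dz^2$ on $\mathbb{C}\setminus\{0\}$ and $Q\subset Q^\times$ the closed subspace of those with $f$ entire; the Lie algebra of holomorphic vector fields on $\mathbb{C}$ vanishing at $0$ acts on both by $(\xi\frac{d}{dz})\cdot(fdz^2)=(\xi f'+2\xi'f)dz^2$, hence on the quotient $Q^\times/Q$. $L_1$ is the closed subalgebra generated by $e_k=z^{k+1}\frac{d}{dz}$, $k\ge1$ (holomorphic vector fields on $\mathbb{C}$ vanishing to order at least $2$ at $0$). For $\nu\in\mathbb{Z}$, $q_\nu$ denotes the class of $z^{\nu-2}dz^2$ in $Q^\times/Q$, so $q_1$ is the class of $z^{-1}dz^2$. $S^m(Q^\times/Q)$ is the completed $m$-fold symmetric tensor power over $\mathbb{C}$ with the diagonal action, $S^*=\bigoplus_{m\ge0}S^m$ with the symmetric product, and $H^0(L_1;\cdot)$ denotes $L_1$-invariants. *)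

theory Defs
  imports "HOL-Analysis.Analysis"
begin

(* Coefficient model.
   - A holomorphic vector field xi(z) d/dz on C is given by its Taylor coefficients b,
     xi(z) = sum_j b j * z^j, entire  <=>  sum_j |b j| R^j < oo for all R > 0.
   - An element of Q^x/Q (Laurent series on C\{0} modulo entire ones) is given by its
     principal part  sum_{n>=1} p n * z^(-n) dz^2  (p 0 = 0); the class is holomorphic on
     C\{0} iff w |-> sum_n p n w^n is entire.
   - An element of the completed m-fold symmetric power is a symmetric coefficient array
     A :: nat list => complex, A [n1,...,nm] being the coefficient of
     z^(-n1) dz^2 (x) ... (x) z^(-nm) dz^2 (n_i >= 1), with
     sum |A ns| R^(n1+...+nm) < oo for all R (i.e. an entire function on C^m). *)

definition entire_coeffs :: "(nat \<Rightarrow> complex) \<Rightarrow> bool" where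
  "entire_coeffs b \<longleftrightarrow> (\<forall>R>0. summable (\<lambda>j. norm (b j) * R ^ j))"

text \<open>L_1: holomorphic vector fields on C vanishing to order at least 2 at 0.\<close>
definition L1 :: "(nat \<Rightarrow> complex) set" where
  "L1 = {b. entire_coeffs b \<and> b 0 = 0 \<and> b 1 = 0}"

definition Sm :: "nat \<Rightarrow> (nat list \<Rightarrow> complex) set" where
  "Sm m = {A. (\<forall>ns. A ns \<noteq> 0 \<longrightarrow> length ns = m \<and> (\<forall>n\<in>set ns. 1 \<le> n))
            \<and> (\<forall>ns ms. mset ns = mset ms \<longrightarrow> A ns = A ms)
            \<and> (\<forall>R>0. (\<lambda>ns. norm (A ns) * R ^ sum_list ns) summable_on UNIV)}"

text \<open>Action of xi = sum_j b j z^j d/dz on the class of z^(-n) dz^2: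
  xi f' + 2 xi' f with f = z^(-n) gives sum_j b j (2j - n) z^(j-1-n) dz^2; terms with
  j-1-n >= 0 lie in Q and vanish in the quotient. Diagonal (derivation) action on
  tensors: sum over the factors. Written for the output coefficient at ns: the
  coefficient of z^(-n') receives b j (j+1-n') times the input coefficient at
  n' + j - 1; only j >= 2 matters for xi in L1 (we sum over j = i+2).\<close>
definition L1_act :: "(nat \<Rightarrow> complex) \<Rightarrow> (nat list \<Rightarrow> complex) \<Rightarrow> (nat list \<Rightarrow> complex)" where
  "L1_act b A ns =
     (if (\<forall>n\<in>set ns. 1 \<le> n) then
        (\<Sum>i<length ns. \<Sum>j. b (j + 2) * (of_nat (j + 3) - of_nat (ns ! i))
                               * A (ns[i := ns ! i + j + 1]))
      else 0)"

text \<open>q_nu = class of z^(nu-2) dz^2 in Q^x/Q (zero if nu >= 2).\<close>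
definition qcls :: "int \<Rightarrow> (nat \<Rightarrow> complex)" where
  "qcls \<nu> = (\<lambda>n. if 1 \<le> n \<and> int n = 2 - \<nu> then 1 else 0)"

definition sympow :: "nat \<Rightarrow> (nat \<Rightarrow> complex) \<Rightarrow> (nat list \<Rightarrow> complex)" where
  "sympow m p = (\<lambda>ns. if length ns = m then prod_list (map p ns) else 0)"

end

(*
  An invariant A is supported on lists with entries >= 1. If some entry ns!i is >= 2, lower
  it to 1 and apply invariance under z^(ns!i) d/dz at the resulting list. The summands from
  entries equal to 1 reproduce A ns up to symmetry, with the nonzero factor ns!i; every other
  summand is A at a list where the excess ns!i - 1 has been moved onto another entry >= 2,
  which keeps the sum but enlarges the distinguished entry. Induction on "sum minus
  distinguished entry" therefore kills A away from (1,...,1).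
*)
theory Submission
  imports Defs
begin

lemma eq_replicate_iff: "xs = replicate n x \<longleftrightarrow> length xs = n \<and> (\<forall>y\<in>set xs. y = x)"
  by (auto intro: replicate_eqI)

lemma mset_eq_mset_replicate_iff: "mset xs = mset (replicate n x) \<longleftrightarrow> xs = replicate n x"
  by (metis eq_replicate_iff mset_eq_length mset_eq_setD)

lemma list_update_neq_replicate: "i < length xs \<Longrightarrow> y \<noteq> x \<Longrightarrow> xs[i := y] \<noteq> replicate n x"
  by (metis in_set_replicate length_list_update nth_list_update_eq nth_mem)

lemma Ball_set_list_update: "\<forall>y\<in>set xs. P y \<Longrightarrow> P x \<Longrightarrow> \<forall>y\<in>set (xs[i := x]). P y"
  using set_update_subset_insert[of xs i x] by blast

lemma sum_list_transfer:
  fixes xs :: "nat list"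
  assumes "i < length xs" "j < length xs" "i \<noteq> j" "1 \<le> xs ! i"
  shows "sum_list (xs[i := 1, j := xs ! j + xs ! i - 1]) = sum_list xs"
  using assms elem_le_sum_list[OF assms(1)] by (simp add: sum_list_update)

lemma qcls_1: "qcls 1 n = (if n = 1 then 1 else 0)"
  by (auto simp: qcls_def)

lemma sympow_qcls_1: "sympow m (qcls 1) ns = (if ns = replicate m 1 then 1 else 0)"
proof -
  have "prod_list (map (qcls 1) ns) = (if \<forall>n\<in>set ns. n = 1 then 1 else 0)"
    by (induction ns) (simp_all add: qcls_1)
  then show ?thesis
    by (simp add: sympow_def eq_replicate_iff)
qed

lemma scaled_sympow_qcls_1_in_Sm: "(\<lambda>ns. c * sympow m (qcls 1) ns) \<in> Sm m"
  unfolding Sm_def mem_Collect_eq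
proof (intro conjI)
  show "\<forall>ns. c * sympow m (qcls 1) ns \<noteq> 0 \<longrightarrow> length ns = m \<and> (\<forall>n\<in>set ns. 1 \<le> n)"
    by (simp add: sympow_qcls_1)
  show "\<forall>ns ms. mset ns = mset ms \<longrightarrow> c * sympow m (qcls 1) ns = c * sympow m (qcls 1) ms"
    by (metis sympow_qcls_1 mset_eq_mset_replicate_iff)
  show "\<forall>R>0. (\<lambda>ns. norm (c * sympow m (qcls 1) ns) * R ^ sum_list ns) summable_on UNIV"
  proof (intro allI impI)
    fix R :: real
    have "finite {ns. norm (c * sympow m (qcls 1) ns) * R ^ sum_list ns \<noteq> 0}"
      by (rule finite_subset[of _ "{replicate m 1}"]) (auto simp: sympow_qcls_1)
    then show "(\<lambda>ns. norm (c * sympow m (qcls 1) ns) * R ^ sum_list ns) summable_on UNIV"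
      by (intro finite_nonzero_values_imp_summable_on) simp
  qed
qed

lemma L1_act_scaled_sympow_qcls_1: "L1_act b (\<lambda>ns. c * sympow m (qcls 1) ns) = (\<lambda>_. 0)"
proof
  fix ns :: "nat list"
  have "ns[i := ns ! i + j + 1] \<noteq> replicate m 1"
    if pos: "\<forall>n\<in>set ns. 1 \<le> n" and i: "i < length ns" for i j
  proof (rule list_update_neq_replicate[OF i])
    have "1 \<le> ns ! i"
      using pos nth_mem[OF i] by blast
    then show "ns ! i + j + 1 \<noteq> 1"
      by simp
  qed
  then show "L1_act b (\<lambda>ns. c * sympow m (qcls 1) ns) ns = 0"
    by (simp add: L1_act_def sympow_qcls_1)
qed

lemma monomial_vector_field_in_L1:
  assumes "2 \<le> d"
  shows "(\<lambda>j. if j = d then 1 else 0) \<in> L1"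
proof -
  have "summable (\<lambda>j. norm (if j = d then 1 else 0 :: complex) * R ^ j)" for R :: real
    by (rule summable_finite[of "{d}"]) auto
  then show ?thesis
    using assms by (simp add: L1_def entire_coeffs_def)
qed

lemma L1_act_monomial:
  assumes "2 \<le> d" "\<forall>n\<in>set ns. 1 \<le> n"
  shows "L1_act (\<lambda>j. if j = d then 1 else 0) A ns
       = (\<Sum>i<length ns. (of_nat (d + 1) - of_nat (ns ! i)) * A (ns[i := ns ! i + d - 1]))"
proof -
  obtain e where e: "d = e + 2"
    using assms(1) by (metis le_add_diff_inverse2)
  have "(\<Sum>j. (if j = e then 1 else 0) * f j * g j) = f e * g e" for f g :: "nat \<Rightarrow> complex"
    by (subst suminf_finite[of "{e}"]) auto
  then show ?thesis
    using assms(2) by (simp add: L1_act_def e add.commute)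
qed

lemma monomial_invariant_eq_0_step:
  assumes sym: "\<forall>ns ms. mset ns = mset ms \<longrightarrow> A ns = A ms"
    and inv: "L1_act (\<lambda>j. if j = ns ! i then 1 else 0) A = (\<lambda>_. 0)"
    and pos: "\<forall>n\<in>set ns. 1 \<le> n" and i: "i < length ns" and big: "2 \<le> ns ! i"
    and moved: "\<And>j. j < length ns \<Longrightarrow> j \<noteq> i \<Longrightarrow> 2 \<le> ns ! j
                  \<Longrightarrow> A (ns[i := 1, j := ns ! j + ns ! i - 1]) = 0"
  shows "A ns = 0"
proof -
  define ns' where "ns' = ns[i := 1]"
  have pos': "\<forall>n\<in>set ns'. 1 \<le> n"
    unfolding ns'_def by (rule Ball_set_list_update[OF pos]) simp
  have len': "length ns' = length ns"
    by (simp add: ns'_def)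
  have ns'_nth: "ns' ! j = (if j = i then 1 else ns ! j)" if "j < length ns" for j
    using that i by (simp add: ns'_def)
  have summand: "(of_nat (ns ! i + 1) - of_nat (ns' ! j)) * A (ns'[j := ns' ! j + ns ! i - 1])
      = (if ns' ! j = 1 then of_nat (ns ! i) * A ns else 0)" if j: "j < length ns" for j
  proof -
    have "1 \<le> ns ! j"
      using pos nth_mem[OF j] by blast
    then consider "j = i" | "j \<noteq> i" "ns ! j = 1" | "j \<noteq> i" "2 \<le> ns ! j"
      by linarith
    then show ?thesis
    proof cases
      case 1
      then show ?thesis
        using i by (simp add: ns'_def)
    next
      case 2
      then have "ns'[j := ns' ! j + ns ! i - 1] = ns[i := ns ! j, j := ns ! i]"
        using i j by (simp add: ns'_def)
      then have "A (ns'[j := ns' ! j + ns ! i - 1]) = A ns"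
        using sym[rule_format, OF mset_swap[OF j i]] by simp
      then show ?thesis
        using 2 j ns'_nth by simp
    next
      case 3
      then show ?thesis
        using moved[OF j] j ns'_nth by (simp add: ns'_def)
    qed
  qed
  have "0 = L1_act (\<lambda>j. if j = ns ! i then 1 else 0) A ns'"
    by (simp add: inv)
  also have "\<dots> = (\<Sum>j<length ns. (of_nat (ns ! i + 1) - of_nat (ns' ! j))
                   * A (ns'[j := ns' ! j + ns ! i - 1]))"
    by (simp only: L1_act_monomial[OF big pos'] len')
  also have "\<dots> = (\<Sum>j<length ns. if ns' ! j = 1 then of_nat (ns ! i) * A ns else 0)"
    by (rule sum.cong[OF refl summand]) simp
  also have "\<dots> = of_nat (card {j\<in>{..<length ns}. ns' ! j = 1}) * (of_nat (ns ! i) * A ns)"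
    by (simp add: sum.inter_filter[symmetric])
  finally have "of_nat (card {j\<in>{..<length ns}. ns' ! j = 1}) * (of_nat (ns ! i) * A ns) = 0"
    by simp
  moreover have "i \<in> {j\<in>{..<length ns}. ns' ! j = 1}"
    using i ns'_nth by simp
  then have "card {j\<in>{..<length ns}. ns' ! j = 1} \<noteq> 0"
    by (auto simp: card_eq_0_iff)
  ultimately show ?thesis
    using big by (simp del: card_0_eq)
qed

lemma monomial_invariant_eq_0:
  assumes sym: "\<forall>ns ms. mset ns = mset ms \<longrightarrow> A ns = A ms"
    and inv: "\<forall>d\<ge>2. L1_act (\<lambda>j. if j = d then 1 else 0) A = (\<lambda>_. 0)"
    and "\<forall>n\<in>set ns. 1 \<le> n" "i < length ns" "2 \<le> ns ! i"
  shows "A ns = 0"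
  using assms(3-5)
proof (induction "sum_list ns - ns ! i" arbitrary: ns i rule: less_induct)
  case less
  note pos = less.prems(1) and i = less.prems(2) and big = less.prems(3)
  show ?case
  proof (rule monomial_invariant_eq_0_step[OF sym _ pos i big])
    show "L1_act (\<lambda>j. if j = ns ! i then 1 else 0) A = (\<lambda>_. 0)"
      using inv big by blast
  next
    fix j assume j: "j < length ns" "j \<noteq> i" "2 \<le> ns ! j"
    define ms where "ms = ns[i := 1, j := ns ! j + ns ! i - 1]"
    have ms_j: "ms ! j = ns ! j + ns ! i - 1"
      using j by (simp add: ms_def)
    show "A ms = 0"
    proof (rule less.hyps[of ms j])
      have "sum_list ms = sum_list ns"
        unfolding ms_def using i j big by (intro sum_list_transfer) auto
      moreover have "ms ! j \<le> sum_list ms"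
        using j by (intro elem_le_sum_list) (simp add: ms_def)
      ultimately show "sum_list ms - ms ! j < sum_list ns - ns ! i"
        using j ms_j by simp
      show "\<forall>n\<in>set ms. 1 \<le> n"
        unfolding ms_def using j big
        by (intro Ball_set_list_update[OF Ball_set_list_update[OF pos]]) simp_all
      show "j < length ms" "2 \<le> ms ! j"
        using j big ms_j by (simp_all add: ms_def)
    qed
  qed
qed

lemma L1_invariant_Sm_eq_0:
  assumes A: "A \<in> Sm m" and inv: "\<forall>b\<in>L1. L1_act b A = (\<lambda>_. 0)"
    and ns: "ns \<noteq> replicate m 1"
  shows "A ns = 0"
proof (rule ccontr)
  assume "A ns \<noteq> 0"
  with A have "length ns = m" and pos: "\<forall>n\<in>set ns. 1 \<le> n"
    unfolding Sm_def by blast+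
  with ns have "\<exists>n\<in>set ns. n \<noteq> 1"
    by (simp add: eq_replicate_iff)
  then obtain i where i: "i < length ns" "ns ! i \<noteq> 1"
    by (auto simp: in_set_conv_nth)
  moreover have "1 \<le> ns ! i"
    using pos nth_mem[OF i(1)] by blast
  ultimately have big: "2 \<le> ns ! i"
    by linarith
  have sym: "\<forall>ns ms. mset ns = mset ms \<longrightarrow> A ns = A ms"
    using A unfolding Sm_def by blast
  have "\<forall>d\<ge>2. L1_act (\<lambda>j. if j = d then 1 else 0) A = (\<lambda>_. 0)"
    using inv monomial_vector_field_in_L1 by blast
  from \<open>A ns \<noteq> 0\<close> monomial_invariant_eq_0[OF sym this pos i(1) big] show False ..
qed

theorem lemma4p8:
  fixes m :: nat
  shows "{A \<in> Sm m. \<forall>b\<in>L1. L1_act b A = (\<lambda>_. 0)}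
         = {(\<lambda>ns. c * sympow m (qcls 1) ns) | c :: complex. True}"
proof (intro set_eqI iffI)
  fix A assume "A \<in> {A \<in> Sm m. \<forall>b\<in>L1. L1_act b A = (\<lambda>_. 0)}"
  then have "A = (\<lambda>ns. A (replicate m 1) * sympow m (qcls 1) ns)"
    using L1_invariant_Sm_eq_0[of A m] by (auto simp: sympow_qcls_1)
  then show "A \<in> {(\<lambda>ns. c * sympow m (qcls 1) ns) | c :: complex. True}"
    by blast
qed (auto simp: scaled_sympow_qcls_1_in_Sm L1_act_scaled_sympow_qcls_1)

end
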